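(* Let $f:\mathbb{R}\to\mathbb{R}$ be a function whose derivative $f'$ is eventually constant, i.e. there exist $t_-\le t_+$ in $\mathbb{R}$ such that $f'(t)=f'(t_-)$ for all $t\le t_-$ and $f'(t)=f'(t_+)$ for all $t\ge t_+$. Let $g(t)=\max(f(t),0)$. Then $$I(g') \le I(f').$$
   Context: Functions considered are continuous and differentiable except possibly at finitely many points; derivatives are taken where they exist, and $h(\infty)$, $h(-\infty)$ denote the limits of $h(t)$ as $t\to\pm\infty$. For $h:\mathbb{R}\to\mathbb{R}$ the total variation on $[a,b]$ is $V_a^b(h)=\sup_{T}\sum_{t_i\in T}|h(t_i)-h(t_{i-1})|$, the supremum over all partitions $T$ of $[a,b]$, and $V_{-\infty}^{\infty}$ is the corresponding total variation over the whole real line. The intrinsic variability of $h$ is $I(h) = V_{-\infty}^{\infty}(h) + |h(\infty)| + |h(-\infty)|$. *)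

theory Defs
  imports "HOL-Analysis.Analysis"
begin

definition deriv_dom :: "(real \<Rightarrow> real) \<Rightarrow> real set" where
  "deriv_dom f = {t. f differentiable (at t)}"

definition total_var :: "real set \<Rightarrow> (real \<Rightarrow> real) \<Rightarrow> ereal" where
  "total_var D h =
     (SUP xs \<in> {xs. sorted_wrt (<) xs \<and> set xs \<subseteq> D}.
        ereal (\<Sum>i < length xs - 1. \<bar>h (xs ! Suc i) - h (xs ! i)\<bar>))"

definition lim_pinf :: "real set \<Rightarrow> (real \<Rightarrow> real) \<Rightarrow> real" where
  "lim_pinf D h = Lim (inf at_top (principal D)) h"

definition lim_minf :: "real set \<Rightarrow> (real \<Rightarrow> real) \<Rightarrow> real" where
  "lim_minf D h = Lim (inf at_bot (principal D)) h"

text \<open>Intrinsic variability I(f') of the derivative f' of f, where f' is the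
  function deriv f on the set of points where f is differentiable:
  I(h) = V(h) + |h(inf)| + |h(-inf)|.\<close>
definition intrinsic_var_deriv :: "(real \<Rightarrow> real) \<Rightarrow> ereal" where
  "intrinsic_var_deriv f =
     total_var (deriv_dom f) (deriv f)
     + ereal \<bar>lim_pinf (deriv_dom f) (deriv f)\<bar>
     + ereal \<bar>lim_minf (deriv_dom f) (deriv f)\<bar>"

end

theory Submission
  imports Defs "HOL-Real_Asymp.Real_Asymp"
begin

(* Near each end f' is constant, so f is affine there; hence so is max(f, 0), and g' is
   eventually constant too.  For h = f and h = g, I(h') is therefore the supremum, over finite
   increasing sequences t_1 < ... < t_n, of the variation of 0, h'(t_1), ..., h'(t_n), 0.
   Where f > 0 we have g' = f', and where f <= 0 we have g' = 0.  Given such a sequence for g',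
   keep the points where f > 0; between a point with f > 0 and a later one with f <= 0 insert a
   point where f' < 0, and between a point with f <= 0 and a later one with f > 0 a point where
   f' > 0.  Such points exist by the mean value theorem, applied between the finitely many points
   where f is not differentiable.  Replacing the zeros of g' by these values of opposite signs
   does not decrease the variation. *)

fun list_var :: "real list \<Rightarrow> real" where
  "list_var (x # y # ys) = \<bar>y - x\<bar> + list_var (y # ys)"
| "list_var _ = 0"

lemma sum_abs_diff_eq_list_var:
  "(\<Sum>i < length xs - 1. \<bar>h (xs ! Suc i) - h (xs ! i)\<bar>) = list_var (map h xs)"
  by (induction xs rule: induct_list012)
    (simp_all add: sum.lessThan_Suc_shift del: sum.lessThan_Suc)

lemma list_var_Cons_le: "list_var (u # vs) \<le> \<bar>u - w\<bar> + list_var (w # vs)"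
  by (cases vs) auto

lemma list_var_insert_le: "list_var (xs @ ys) \<le> list_var (xs @ z # ys)"
proof (induction xs rule: induct_list012)
  case 1
  then show ?case by (cases ys) auto
next
  case (2 x)
  then show ?case using list_var_Cons_le[of x ys z] by (simp add: abs_minus_commute)
qed simp

lemma list_var_append_Cons: "list_var (xs @ y # ys) = list_var (xs @ [y]) + list_var (y # ys)"
  by (induction xs rule: induct_list012) auto

definition partitions :: "real set \<Rightarrow> real list set" where
  "partitions D = {xs. sorted_wrt (<) xs \<and> set xs \<subseteq> D}"

(* I(h) is the total variation of h extended by 0 at both infinities; padded_var h xs is the
   term of that supremum belonging to the partition xs. *)
definition padded_var :: "(real \<Rightarrow> real) \<Rightarrow> real list \<Rightarrow> real" where
  "padded_var h xs = list_var (0 # map h xs @ [0])"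

lemma total_var_eq_SUP_list_var:
  "total_var D h = (SUP xs \<in> partitions D. ereal (list_var (map h xs)))"
  unfolding total_var_def partitions_def sum_abs_diff_eq_list_var ..

lemma padded_var_extend:
  assumes "h lo = a" "h hi = b"
  shows "padded_var h (lo # xs @ [hi]) = \<bar>a\<bar> + list_var (map h (lo # xs @ [hi])) + \<bar>b\<bar>"
  using list_var_append_Cons[of "a # map h xs" b "[0]"] assms by (simp add: padded_var_def)

lemma padded_var_le_extend: "padded_var h xs \<le> padded_var h (lo # xs @ [hi])"
proof -
  have "list_var ([0] @ map h xs @ [0]) \<le> list_var ([0] @ h lo # map h xs @ [0])"
    by (rule list_var_insert_le)
  also have "\<dots> \<le> list_var ((0 # h lo # map h xs) @ h hi # [0])"
    using list_var_insert_le[of "0 # h lo # map h xs" "[0]" "h hi"] by simp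
  finally show ?thesis by (simp add: padded_var_def)
qed

lemma list_var_le_extend: "list_var (map h xs) \<le> list_var (map h (lo # xs @ [hi]))"
proof -
  have "list_var ([] @ map h xs) \<le> list_var ([] @ h lo # map h xs)"
    by (rule list_var_insert_le)
  also have "\<dots> \<le> list_var ((h lo # map h xs) @ [h hi])"
    using list_var_insert_le[of "h lo # map h xs" "[]" "h hi"] by simp
  finally show ?thesis by simp
qed

lemma partition_extend:
  assumes "xs \<in> partitions D"
    and "\<forall>\<^sub>F x in at_bot. x \<in> D \<and> h x = a" and "\<forall>\<^sub>F x in at_top. x \<in> D \<and> h x = b"
  obtains lo hi where "lo # xs @ [hi] \<in> partitions D" "h lo = a" "h hi = b"
proof -
  have "\<forall>\<^sub>F x in at_bot. (x \<in> D \<and> h x = a) \<and> (\<forall>y\<in>set xs. x < y)"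
    by (intro eventually_conj[OF assms(2)] eventually_ball_finite) auto
  then obtain lo where lo: "lo \<in> D" "h lo = a" "\<forall>y\<in>set xs. lo < y"
    using eventually_happens'[OF trivial_limit_at_bot_linorder] by blast
  have "\<forall>\<^sub>F x in at_top. (x \<in> D \<and> h x = b) \<and> (\<forall>y\<in>insert lo (set xs). y < x)"
    by (intro eventually_conj[OF assms(3)] eventually_ball_finite) auto
  then obtain hi where hi: "hi \<in> D" "h hi = b" "\<forall>y\<in>insert lo (set xs). y < hi"
    using eventually_happens'[OF trivial_limit_at_top_linorder] by blast
  have "sorted_wrt (<) (lo # xs @ [hi])"
    using assms(1) lo(3) hi(3) by (simp add: partitions_def sorted_wrt_append)
  with assms(1) lo hi show thesis
    by (intro that[of lo hi]) (auto simp: partitions_def)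
qed

lemma total_var_add_abs_eq_SUP_padded_var:
  assumes bot: "\<forall>\<^sub>F x in at_bot. x \<in> D \<and> h x = a"
    and top: "\<forall>\<^sub>F x in at_top. x \<in> D \<and> h x = b"
  shows "total_var D h + ereal \<bar>b\<bar> + ereal \<bar>a\<bar> = (SUP xs \<in> partitions D. ereal (padded_var h xs))"
    (is "?V = ?P")
proof (rule antisym)
  have nonempty: "partitions D \<noteq> {}"
    by (auto simp: partitions_def intro!: exI[of _ "[]"])
  have "?V = total_var D h + ereal (\<bar>b\<bar> + \<bar>a\<bar>)"
    by (simp only: add.assoc plus_ereal.simps(1))
  also have "\<dots> = (SUP xs \<in> partitions D. ereal (list_var (map h xs)) + ereal (\<bar>b\<bar> + \<bar>a\<bar>))"
    unfolding total_var_eq_SUP_list_var by (rule SUP_ereal_add_left[OF nonempty, symmetric]) simp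
  also have "\<dots> \<le> ?P"
  proof (rule SUP_mono)
    fix xs assume "xs \<in> partitions D"
    then obtain lo hi where ext: "lo # xs @ [hi] \<in> partitions D" "h lo = a" "h hi = b"
      using bot top by (rule partition_extend)
    have "list_var (map h xs) + (\<bar>b\<bar> + \<bar>a\<bar>) \<le> padded_var h (lo # xs @ [hi])"
      using list_var_le_extend[of h xs lo hi] padded_var_extend[of h lo a hi b xs] ext(2,3)
      by linarith
    with ext(1) show "\<exists>ys \<in> partitions D.
        ereal (list_var (map h xs)) + ereal (\<bar>b\<bar> + \<bar>a\<bar>) \<le> ereal (padded_var h ys)"
      by (metis ereal_less_eq(3) plus_ereal.simps(1))
  qed
  finally show "?V \<le> ?P" .
next
  show "?P \<le> ?V"
  proof (rule SUP_least)
    fix xs assume "xs \<in> partitions D"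
    then obtain lo hi where ext: "lo # xs @ [hi] \<in> partitions D" "h lo = a" "h hi = b"
      using bot top by (rule partition_extend)
    have "padded_var h xs \<le> list_var (map h (lo # xs @ [hi])) + \<bar>b\<bar> + \<bar>a\<bar>"
      using padded_var_le_extend[of h xs lo hi] padded_var_extend[of h lo a hi b xs] ext(2,3)
      by linarith
    then have "ereal (padded_var h xs)
        \<le> ereal (list_var (map h (lo # xs @ [hi]))) + ereal \<bar>b\<bar> + ereal \<bar>a\<bar>"
      by (simp only: plus_ereal.simps(1) ereal_less_eq(3))
    also have "\<dots> \<le> ?V"
      unfolding total_var_eq_SUP_list_var by (intro add_right_mono SUP_upper ext(1))
    finally show "ereal (padded_var h xs) \<le> ?V" .
  qed
qed

lemma Lim_inf_principal_eventually_const: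
  assumes "F \<noteq> bot" and "\<forall>\<^sub>F x in F. x \<in> D \<and> h x = c"
  shows "Lim (inf F (principal D)) h = c"
proof (rule tendsto_Lim)
  show "inf F (principal D) \<noteq> bot"
  proof
    assume "inf F (principal D) = bot"
    then have "\<forall>\<^sub>F x in F. x \<notin> D"
      using eventually_inf_principal[of "\<lambda>_. False" F D] by simp
    with assms(2) have "\<forall>\<^sub>F x in F. False"
      by eventually_elim simp
    with assms(1) show False by simp
  qed
  show "(h \<longlongrightarrow> c) (inf F (principal D))"
    using assms(2)
    by (intro tendsto_eventually) (auto simp: eventually_inf_principal elim: eventually_mono)
qed

lemma has_real_derivative_imp_deriv_dom:
  "(h has_real_derivative d) (at x) \<Longrightarrow> x \<in> deriv_dom h \<and> deriv h x = d"
  by (auto simp: deriv_dom_def real_differentiable_def DERIV_imp_deriv)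

lemma intrinsic_var_deriv_eq_SUP_padded_var:
  assumes "\<forall>\<^sub>F x in at_bot. (h has_real_derivative a) (at x)"
    and "\<forall>\<^sub>F x in at_top. (h has_real_derivative b) (at x)"
  shows "intrinsic_var_deriv h
    = (SUP xs \<in> partitions (deriv_dom h). ereal (padded_var (deriv h) xs))"
proof -
  have bot: "\<forall>\<^sub>F x in at_bot. x \<in> deriv_dom h \<and> deriv h x = a"
    using assms(1) by (rule eventually_mono) (rule has_real_derivative_imp_deriv_dom)
  have top: "\<forall>\<^sub>F x in at_top. x \<in> deriv_dom h \<and> deriv h x = b"
    using assms(2) by (rule eventually_mono) (rule has_real_derivative_imp_deriv_dom)
  show ?thesis
    unfolding intrinsic_var_deriv_def lim_pinf_def lim_minf_def
      Lim_inf_principal_eventually_const[OF trivial_limit_at_top_linorder top]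
      Lim_inf_principal_eventually_const[OF trivial_limit_at_bot_linorder bot]
    by (rule total_var_add_abs_eq_SUP_padded_var[OF bot top])
qed

context
  fixes k h :: "real \<Rightarrow> real" and P :: "real \<Rightarrow> bool" and Dk Dh :: "real set"
  assumes agree: "\<And>x. x \<in> Dk \<Longrightarrow> P x \<Longrightarrow> x \<in> Dh \<and> k x = h x"
    and vanish: "\<And>x. x \<in> Dk \<Longrightarrow> \<not> P x \<Longrightarrow> k x = 0"
    and descent: "\<And>x y. x < y \<Longrightarrow> P x \<Longrightarrow> \<not> P y \<Longrightarrow> \<exists>r\<in>{x<..<y}. r \<in> Dh \<and> h r < 0"
    and ascent: "\<And>x y. x < y \<Longrightarrow> \<not> P x \<Longrightarrow> P y \<Longrightarrow> \<exists>s\<in>{x<..<y}. s \<in> Dh \<and> 0 < h s"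
begin

(* A run of zeros of k is replaced by a negative value of h after a point of P and a positive
   one before the next point of P, which cannot decrease the variation.  The left neighbour c
   has to be nonpositive when xs starts outside P, since a positive value may be inserted next
   to it. *)
lemma list_var_le_sign_pattern:
  assumes "xs \<in> partitions Dk" and "c \<le> 0 \<or> P (hd xs)"
  shows "\<exists>ys \<in> partitions Dh. (\<forall>y\<in>set ys. hd xs \<le> y) \<and>
    list_var (c # map k xs @ [0]) \<le> list_var (c # map h ys @ [0])"
  using assms
proof (induction xs arbitrary: c rule: induct_list012)
  case 1
  show ?case by (intro bexI[of _ "[]"]) (auto simp: partitions_def)
next
  case (2 x)
  then have x: "x \<in> Dk" by (simp add: partitions_def)
  show ?case
  proof (cases "P x")
    case True
    with agree[OF x] show ?thesis by (intro bexI[of _ "[x]"]) (auto simp: partitions_def)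
  next
    case False
    with vanish[OF x] show ?thesis by (intro bexI[of _ "[]"]) (auto simp: partitions_def)
  qed
next
  case (3 x y zs)
  from "3.prems"(1) have x: "x \<in> Dk" "x < y" and yzs: "y # zs \<in> partitions Dk"
    by (auto simp: partitions_def)
  have split_head: "list_var (c # map k (x # y # zs) @ [0])
      = \<bar>k x - c\<bar> + list_var (k x # map k (y # zs) @ [0])" by simp
  consider (pos_pos) "P x" "P y" | (pos_nonpos) "P x" "\<not> P y"
    | (nonpos_pos) "\<not> P x" "P y" | (nonpos_nonpos) "\<not> P x" "\<not> P y"
    by blast
  then show ?case
  proof cases
    case pos_pos
    obtain ys where ys: "ys \<in> partitions Dh" "\<forall>u\<in>set ys. y \<le> u"
      "list_var (h x # map k (y # zs) @ [0]) \<le> list_var (h x # map h ys @ [0])"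
      using "3.IH"(2)[of "h x", OF yzs] pos_pos(2) by auto
    have "x # ys \<in> partitions Dh"
      using ys(1,2) agree[OF x(1) pos_pos(1)] x(2) by (auto simp: partitions_def)
    then show ?thesis
      using split_head ys(2,3) agree[OF x(1) pos_pos(1)] x(2) by (intro bexI[of _ "x # ys"]) auto
  next
    case pos_nonpos
    obtain r where r: "x < r" "r < y" "r \<in> Dh" "h r < 0"
      using descent[OF x(2) pos_nonpos] by auto
    obtain ys where ys: "ys \<in> partitions Dh" "\<forall>u\<in>set ys. y \<le> u"
      "list_var (h r # map k (y # zs) @ [0]) \<le> list_var (h r # map h ys @ [0])"
      using "3.IH"(2)[of "h r", OF yzs] r(4) by auto
    have "x # r # ys \<in> partitions Dh"
      using ys(1,2) agree[OF x(1) pos_nonpos(1)] r by (auto simp: partitions_def)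
    moreover have "list_var (h x # map k (y # zs) @ [0])
        \<le> \<bar>h x - h r\<bar> + list_var (h r # map k (y # zs) @ [0])"
      by (rule list_var_Cons_le)
    ultimately show ?thesis
      using split_head ys(2,3) agree[OF x(1) pos_nonpos(1)] r(1,2)
      by (intro bexI[of _ "x # r # ys"]) (auto simp: abs_minus_commute)
  next
    case nonpos_pos
    have kx: "k x = 0" and c: "c \<le> 0"
      using vanish[OF x(1) nonpos_pos(1)] "3.prems"(2) nonpos_pos(1) by auto
    obtain s where s: "x < s" "s < y" "s \<in> Dh" "0 < h s"
      using ascent[OF x(2) nonpos_pos] by auto
    obtain ys where ys: "ys \<in> partitions Dh" "\<forall>u\<in>set ys. y \<le> u"
      "list_var (h s # map k (y # zs) @ [0]) \<le> list_var (h s # map h ys @ [0])"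
      using "3.IH"(2)[of "h s", OF yzs] nonpos_pos(2) by auto
    have "s # ys \<in> partitions Dh"
      using ys(1,2) s by (auto simp: partitions_def)
    moreover have "list_var (0 # map k (y # zs) @ [0])
        \<le> \<bar>0 - h s\<bar> + list_var (h s # map k (y # zs) @ [0])"
      by (rule list_var_Cons_le)
    ultimately show ?thesis
      using split_head kx c ys(2,3) s(1,2,4) by (intro bexI[of _ "s # ys"]) auto
  next
    case nonpos_nonpos
    have kx: "k x = 0" and ky: "k y = 0" and c: "c \<le> 0"
      using vanish x(1) yzs nonpos_nonpos "3.prems"(2) by (auto simp: partitions_def)
    obtain ys where ys: "ys \<in> partitions Dh" "\<forall>u\<in>set ys. y \<le> u"
      "list_var (c # map k (y # zs) @ [0]) \<le> list_var (c # map h ys @ [0])"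
      using "3.IH"(2)[of c, OF yzs] c by auto
    then show ?thesis
      using split_head kx ky x(2) by (intro bexI[of _ ys]) auto
  qed
qed

lemma padded_var_le_sign_pattern:
  assumes "xs \<in> partitions Dk"
  shows "\<exists>ys \<in> partitions Dh. padded_var k xs \<le> padded_var h ys"
  using list_var_le_sign_pattern[OF assms, of 0] by (auto simp: padded_var_def)

end

lemma deriv_pos_part_pos:
  fixes f :: "real \<Rightarrow> real"
  assumes cont: "continuous_on UNIV f" and pos: "0 < f x"
    and diff: "(\<lambda>t. max (f t) 0) differentiable (at x)"
  shows "f differentiable (at x) \<and> deriv (\<lambda>t. max (f t) 0) x = deriv f x"
proof -
  have "open {t. 0 < f t}"
    using cont by (intro open_Collect_less continuous_intros)
  then have "\<forall>\<^sub>F t in nhds x. t \<in> {t. 0 < f t}"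
    using pos by (intro eventually_nhds_in_open) auto
  then have "\<forall>\<^sub>F t in nhds x. max (f t) 0 = f t"
    by eventually_elim simp
  then have "((\<lambda>t. max (f t) 0) has_real_derivative D) (at x) \<longleftrightarrow>
      (f has_real_derivative D) (at x)" for D
    by (rule DERIV_cong_ev[OF refl _ refl])
  with diff show ?thesis
    by (metis DERIV_deriv_iff_real_differentiable DERIV_imp_deriv real_differentiable_def)
qed

lemma deriv_pos_part_nonpos:
  fixes f :: "real \<Rightarrow> real"
  assumes "(\<lambda>t. max (f t) 0) differentiable (at x)" and "f x \<le> 0"
  shows "deriv (\<lambda>t. max (f t) 0) x = 0"
proof -
  have "((\<lambda>t. max (f t) 0) has_real_derivative deriv (\<lambda>t. max (f t) 0) x) (at x)"
    using assms(1) by (simp add: DERIV_deriv_iff_real_differentiable)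
  then show ?thesis
    by (rule DERIV_local_min[of _ _ _ 1]) (use assms(2) in auto)
qed

lemma exists_pos_deriv_between:
  fixes f :: "real \<Rightarrow> real"
  assumes "a < b" and "continuous_on {a..b} f"
    and "finite {t \<in> {a<..<b}. \<not> f differentiable (at t)}" and "f a < f b"
  shows "\<exists>y\<in>{a<..<b}. \<exists>d>0. (f has_real_derivative d) (at y)"
  using assms
proof (induction "card {t \<in> {a<..<b}. \<not> f differentiable (at t)}" arbitrary: a b rule: less_induct)
  case less
  show ?case
  proof (cases "\<exists>c\<in>{a<..<b}. \<not> f differentiable (at c)")
    case False
    then obtain l z where z: "a < z" "z < b" "(f has_real_derivative l) (at z)"
      "f b - f a = (b - a) * l"
      using MVT[OF less.prems(1,2)] by auto
    have "0 < l"
      using z(4) less.prems(1,4) zero_less_mult_pos[of "b - a" l] by simp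
    with z show ?thesis by auto
  next
    case True
    then obtain c where c: "a < c" "c < b" "\<not> f differentiable (at c)" by auto
    \<comment> \<open>f still increases on one side of c, which has fewer bad points\<close>
    have card_less: "card {t \<in> {u<..<v}. \<not> f differentiable (at t)}
        < card {t \<in> {a<..<b}. \<not> f differentiable (at t)}"
      if "{u<..<v} \<subseteq> {a<..<b}" "c \<notin> {u<..<v}" for u v
      by (rule psubset_card_mono[OF less.prems(3)]) (use that c in auto)
    consider (left) "f a < f c" | (right) "f c < f b"
      using less.prems(4) by linarith
    then show ?thesis
    proof cases
      case left
      have "\<exists>y\<in>{a<..<c}. \<exists>d>0. (f has_real_derivative d) (at y)"
        by (rule less.hyps[OF card_less c(1) continuous_on_subset[OF less.prems(2)] _ left])
          (use c in \<open>auto intro: finite_subset[OF _ less.prems(3)]\<close>)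
      with c show ?thesis by auto
    next
      case right
      have "\<exists>y\<in>{c<..<b}. \<exists>d>0. (f has_real_derivative d) (at y)"
        by (rule less.hyps[OF card_less c(2) continuous_on_subset[OF less.prems(2)] _ right])
          (use c in \<open>auto intro: finite_subset[OF _ less.prems(3)]\<close>)
      with c show ?thesis by auto
    qed
  qed
qed

lemma pos_part_padded_var_le:
  fixes f :: "real \<Rightarrow> real"
  assumes cont: "continuous_on UNIV f" and fin: "finite {t. \<not> f differentiable (at t)}"
    and xs: "xs \<in> partitions (deriv_dom (\<lambda>t. max (f t) 0))"
  shows "\<exists>ys \<in> partitions (deriv_dom f).
    padded_var (deriv (\<lambda>t. max (f t) 0)) xs \<le> padded_var (deriv f) ys"
proof (rule padded_var_le_sign_pattern[where P = "\<lambda>x. 0 < f x", OF _ _ _ _ xs])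
  let ?g = "\<lambda>t. max (f t) 0"
  show "x \<in> deriv_dom f \<and> deriv ?g x = deriv f x" if "x \<in> deriv_dom ?g" "0 < f x" for x
    using deriv_pos_part_pos[OF cont that(2)] that(1) by (simp add: deriv_dom_def)
  show "deriv ?g x = 0" if "x \<in> deriv_dom ?g" "\<not> 0 < f x" for x
    using deriv_pos_part_nonpos that by (simp add: deriv_dom_def)
  show "\<exists>s\<in>{x<..<y}. s \<in> deriv_dom f \<and> 0 < deriv f s" if xy: "x < y" "\<not> 0 < f x" "0 < f y" for x y
  proof -
    have "finite {t \<in> {x<..<y}. \<not> f differentiable (at t)}"
      using fin by (rule finite_subset[rotated]) auto
    then obtain s d where "s \<in> {x<..<y}" "0 < d" "(f has_real_derivative d) (at s)"
      using exists_pos_deriv_between[OF xy(1) continuous_on_subset[OF cont]] xy(2,3) by force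
    then show ?thesis using has_real_derivative_imp_deriv_dom by blast
  qed
  show "\<exists>r\<in>{x<..<y}. r \<in> deriv_dom f \<and> deriv f r < 0" if xy: "x < y" "0 < f x" "\<not> 0 < f y" for x y
  proof -
    have "finite {t \<in> {x<..<y}. \<not> (\<lambda>t. - f t) differentiable (at t)}"
      using fin by (rule finite_subset[rotated]) auto
    then obtain r d where "r \<in> {x<..<y}" "0 < d" "((\<lambda>t. - f t) has_real_derivative d) (at r)"
      using exists_pos_deriv_between[OF xy(1) continuous_on_minus[OF continuous_on_subset[OF cont]]]
        xy(2,3)
      by force
    then have "r \<in> {x<..<y}" "0 < d" "(f has_real_derivative - d) (at r)"
      using DERIV_minus by fastforce+
    then show ?thesis using has_real_derivative_imp_deriv_dom by fastforce
  qed
qed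

lemma eventually_in_open_half_line:
  fixes F :: "real filter"
  assumes "F = at_top \<or> F = at_bot" and "\<forall>\<^sub>F x in F. P x"
  obtains S where "open S" "convex S" "\<forall>x\<in>S. P x" "\<forall>\<^sub>F x in F. x \<in> S"
  using assms(1)
proof
  assume F: "F = at_top"
  then obtain T where "\<forall>x\<ge>T. P x"
    using assms(2) by (auto simp: eventually_at_top_linorder)
  then show thesis by (intro that[of "{T<..}"]) (auto simp: F)
next
  assume F: "F = at_bot"
  then obtain T where "\<forall>x\<le>T. P x"
    using assms(2) by (auto simp: eventually_at_bot_linorder)
  then show thesis by (intro that[of "{..<T}"]) (auto simp: F)
qed

lemma eventually_affine_of_deriv:
  fixes f :: "real \<Rightarrow> real" and F :: "real filter"
  assumes "F = at_top \<or> F = at_bot" and "\<forall>\<^sub>F x in F. (f has_real_derivative \<beta>) (at x)"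
  shows "\<exists>\<alpha>. \<forall>\<^sub>F x in F. f x = \<alpha> + \<beta> * x"
proof -
  obtain S where S: "convex S" "\<forall>x\<in>S. (f has_real_derivative \<beta>) (at x)" "\<forall>\<^sub>F x in F. x \<in> S"
    using eventually_in_open_half_line[OF assms] by metis
  have "\<exists>\<alpha>. \<forall>x\<in>S. f x - \<beta> * x = \<alpha>"
  proof (rule has_field_derivative_zero_constant[OF S(1)])
    fix x assume "x \<in> S"
    then have "(f has_real_derivative \<beta>) (at x within S)"
      using S(2) has_field_derivative_at_within by blast
    then show "((\<lambda>x. f x - \<beta> * x) has_real_derivative 0) (at x within S)"
      by (auto intro!: derivative_eq_intros)
  qed
  then obtain \<alpha> where "\<forall>x\<in>S. f x - \<beta> * x = \<alpha>" by blast
  with S(3) have "\<forall>\<^sub>F x in F. f x = \<alpha> + \<beta> * x"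
    by (auto elim!: eventually_mono)
  then show ?thesis ..
qed

lemma eventually_max_affine:
  fixes F :: "real filter"
  assumes "F = at_top \<or> F = at_bot"
  shows "\<exists>\<alpha>' \<beta>'. \<forall>\<^sub>F x in F. max (\<alpha> + \<beta> * x) 0 = \<alpha>' + \<beta>' * x"
proof -
  have pos: "(\<forall>\<^sub>F x in at_top. 0 < \<alpha> + \<beta> * x) \<and> (\<forall>\<^sub>F x in at_bot. \<alpha> + \<beta> * x < 0)" if "0 < \<beta>"
    using that by (intro conjI; real_asymp)
  have neg: "(\<forall>\<^sub>F x in at_top. \<alpha> + \<beta> * x < 0) \<and> (\<forall>\<^sub>F x in at_bot. 0 < \<alpha> + \<beta> * x)" if "\<beta> < 0"
    using that by (intro conjI; real_asymp)
  consider (flat) "\<beta> = 0" | (positive) "\<forall>\<^sub>F x in F. 0 < \<alpha> + \<beta> * x"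
    | (negative) "\<forall>\<^sub>F x in F. \<alpha> + \<beta> * x < 0"
    using assms pos neg by (cases \<beta> "0::real" rule: linorder_cases) auto
  then show ?thesis
  proof cases
    case flat
    then show ?thesis by (intro exI[of _ "max \<alpha> 0"] exI[of _ 0]) simp
  next
    case positive
    then show ?thesis by (intro exI[of _ \<alpha>] exI[of _ \<beta>]) (auto elim: eventually_mono)
  next
    case negative
    then show ?thesis by (intro exI[of _ 0] exI[of _ 0]) (auto elim: eventually_mono)
  qed
qed

lemma eventually_deriv_of_affine:
  fixes g :: "real \<Rightarrow> real" and F :: "real filter"
  assumes "F = at_top \<or> F = at_bot" and "\<forall>\<^sub>F x in F. g x = \<alpha> + \<beta> * x"
  shows "\<forall>\<^sub>F x in F. (g has_real_derivative \<beta>) (at x)"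
proof -
  obtain S where S: "open S" "\<forall>x\<in>S. g x = \<alpha> + \<beta> * x" "\<forall>\<^sub>F x in F. x \<in> S"
    using eventually_in_open_half_line[OF assms] by metis
  have "(g has_real_derivative \<beta>) (at x)" if "x \<in> S" for x
  proof -
    have "((\<lambda>x. \<alpha> + \<beta> * x) has_real_derivative \<beta>) (at x)"
      by (auto intro!: derivative_eq_intros)
    then show ?thesis
      by (rule has_field_derivative_transform_within_open[OF _ S(1) that]) (use S(2) in auto)
  qed
  with S(3) show ?thesis by (auto elim: eventually_mono)
qed

lemma eventually_deriv_pos_part:
  fixes f :: "real \<Rightarrow> real" and F :: "real filter"
  assumes F: "F = at_top \<or> F = at_bot" and "\<forall>\<^sub>F x in F. (f has_real_derivative \<beta>) (at x)"
  shows "\<exists>\<beta>'. \<forall>\<^sub>F x in F. ((\<lambda>t. max (f t) 0) has_real_derivative \<beta>') (at x)"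
proof -
  obtain \<alpha> where \<alpha>: "\<forall>\<^sub>F x in F. f x = \<alpha> + \<beta> * x"
    using eventually_affine_of_deriv[OF assms] by blast
  obtain \<alpha>' \<beta>' where "\<forall>\<^sub>F x in F. max (\<alpha> + \<beta> * x) 0 = \<alpha>' + \<beta>' * x"
    using eventually_max_affine[OF F] by blast
  with \<alpha> have "\<forall>\<^sub>F x in F. max (f x) 0 = \<alpha>' + \<beta>' * x"
    by eventually_elim simp
  then have "\<forall>\<^sub>F x in F. ((\<lambda>t. max (f t) 0) has_real_derivative \<beta>') (at x)"
    by (rule eventually_deriv_of_affine[OF F])
  then show ?thesis ..
qed

theorem lemma2:
  fixes f :: "real \<Rightarrow> real" and tm tp :: real
  assumes cont: "continuous_on UNIV f"
    and fin: "finite {t. \<not> f differentiable (at t)}"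
    and tle: "tm \<le> tp"
    and left: "\<And>t. t \<le> tm \<Longrightarrow> f differentiable (at t) \<and> deriv f t = deriv f tm"
    and right: "\<And>t. t \<ge> tp \<Longrightarrow> f differentiable (at t) \<and> deriv f t = deriv f tp"
  shows "intrinsic_var_deriv (\<lambda>t. max (f t) 0) \<le> intrinsic_var_deriv f"
proof -
  let ?g = "\<lambda>t. max (f t) 0"
  have f_bot: "\<forall>\<^sub>F x in at_bot. (f has_real_derivative deriv f tm) (at x)"
    using eventually_le_at_bot[of tm]
    by eventually_elim (metis left DERIV_deriv_iff_real_differentiable)
  have f_top: "\<forall>\<^sub>F x in at_top. (f has_real_derivative deriv f tp) (at x)"
    using eventually_ge_at_top[of tp]
    by eventually_elim (metis right DERIV_deriv_iff_real_differentiable)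
  obtain a where g_bot: "\<forall>\<^sub>F x in at_bot. (?g has_real_derivative a) (at x)"
    using eventually_deriv_pos_part[OF _ f_bot] by blast
  obtain b where g_top: "\<forall>\<^sub>F x in at_top. (?g has_real_derivative b) (at x)"
    using eventually_deriv_pos_part[OF _ f_top] by blast
  have "intrinsic_var_deriv ?g
      = (SUP xs \<in> partitions (deriv_dom ?g). ereal (padded_var (deriv ?g) xs))"
    using g_bot g_top by (rule intrinsic_var_deriv_eq_SUP_padded_var)
  also have "\<dots> \<le> (SUP ys \<in> partitions (deriv_dom f). ereal (padded_var (deriv f) ys))"
    by (rule SUP_mono) (use pos_part_padded_var_le[OF cont fin] in force)
  also have "\<dots> = intrinsic_var_deriv f"
    using f_bot f_top by (rule intrinsic_var_deriv_eq_SUP_padded_var[symmetric])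
  finally show ?thesis .
qed

end
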